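(* Let $T$ be a tree and $x\in\mathsf L_T$. Let $S\subset T$ be the subgraph with vertices those $\alpha\in V(T)$ with $x\in\mathsf L_T(\alpha)$, and edges those $\{\alpha,\beta\}\in E(T)$ with both $\alpha,\beta$ such vertices. Then $S$ is a tree.
   Context: A tree is a nonempty finite connected acyclic graph with vertex set $V(T)$ and edge set $E(T)$ (two-element subsets of $V(T)$). Arboreal singularity: for $\alpha\in V(T)$ let $\mathsf L_T(\alpha)=\mathbb R^{V(T)\setminus\{\alpha\}}$ with coordinates $x_\gamma(\alpha)$; $\mathsf L_T$ is the quotient of $\coprod_\alpha\mathsf L_T(\alpha)$ by the equivalence relation generated by identifying, for each edge $\{\alpha,\beta\}$, $\{x_\gamma(\alpha)\}\sim\{x_\gamma(\beta)\}$ whenever $x_\beta(\alpha)=x_\alpha(\beta)\ge0$ and $x_\gamma(\alpha)=x_\gamma(\beta)$ for $\gamma\ne\alpha,\beta$; each $\mathsf L_T(\alpha)$ is regarded as a subspace of $\mathsf L_T$. *)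

theory Defs
  imports Complex_Main "HOL-Library.FuncSet"
begin

definition is_graph :: "'a set \<Rightarrow> 'a set set \<Rightarrow> bool" where
  "is_graph V E \<longleftrightarrow> (\<forall>e\<in>E. \<exists>a b. e = {a, b} \<and> a \<in> V \<and> b \<in> V \<and> a \<noteq> b)"

definition walk :: "'a set set \<Rightarrow> 'a list \<Rightarrow> bool" where
  "walk E xs \<longleftrightarrow> xs \<noteq> [] \<and> (\<forall>i. Suc i < length xs \<longrightarrow> {xs ! i, xs ! Suc i} \<in> E)"

definition graph_connected :: "'a set \<Rightarrow> 'a set set \<Rightarrow> bool" where
  "graph_connected V E \<longleftrightarrow>
     (\<forall>a\<in>V. \<forall>b\<in>V. \<exists>xs. walk E xs \<and> set xs \<subseteq> V \<and> hd xs = a \<and> last xs = b)"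

definition is_cycle :: "'a set set \<Rightarrow> 'a list \<Rightarrow> bool" where
  "is_cycle E xs \<longleftrightarrow> length xs \<ge> 3 \<and> distinct xs \<and> walk E xs \<and> {last xs, hd xs} \<in> E"

definition graph_acyclic :: "'a set set \<Rightarrow> bool" where
  "graph_acyclic E \<longleftrightarrow> \<not> (\<exists>xs. is_cycle E xs)"

definition is_tree :: "'a set \<Rightarrow> 'a set set \<Rightarrow> bool" where
  "is_tree V E \<longleftrightarrow> finite V \<and> V \<noteq> {} \<and> is_graph V E \<and> graph_connected V E \<and> graph_acyclic E"

text \<open>Arboreal singularity. A point of the chart L_T(alpha) = R^(V - {alpha}) is a pair
  (alpha, x) with x an extensional function on V - {alpha}; x gamma is the coordinate x_gamma(alpha).\<close>

definition arb_carrier :: "'a set \<Rightarrow> ('a \<times> ('a \<Rightarrow> real)) set" where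
  "arb_carrier V = {(\<alpha>, x). \<alpha> \<in> V \<and> x \<in> extensional (V - {\<alpha>})}"

definition arb_ident :: "'a set \<Rightarrow> 'a set set \<Rightarrow> (('a \<times> ('a \<Rightarrow> real)) \<times> ('a \<times> ('a \<Rightarrow> real))) set" where
  "arb_ident V E = {((\<alpha>, x), (\<beta>, y)).
      {\<alpha>, \<beta>} \<in> E \<and> (\<alpha>, x) \<in> arb_carrier V \<and> (\<beta>, y) \<in> arb_carrier V \<and>
      x \<beta> = y \<alpha> \<and> x \<beta> \<ge> 0 \<and> (\<forall>\<gamma>\<in>V - {\<alpha>, \<beta>}. x \<gamma> = y \<gamma>)}"

definition arb_rel :: "'a set \<Rightarrow> 'a set set \<Rightarrow> (('a \<times> ('a \<Rightarrow> real)) \<times> ('a \<times> ('a \<Rightarrow> real))) set" where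
  "arb_rel V E = Id_on (arb_carrier V) \<union> (arb_ident V E \<union> (arb_ident V E)\<inverse>)\<^sup>+"

definition arb_sing :: "'a set \<Rightarrow> 'a set set \<Rightarrow> ('a \<times> ('a \<Rightarrow> real)) set set" where
  "arb_sing V E = arb_carrier V // arb_rel V E"

definition in_chart :: "('a \<times> ('a \<Rightarrow> real)) set \<Rightarrow> 'a \<Rightarrow> bool" where
  "in_chart p \<alpha> \<longleftrightarrow> (\<exists>x. (\<alpha>, x) \<in> p)"

end

theory Submission
  imports Defs
begin

text \<open>A chain of generating identifications from a point of the class \<open>p\<close> to another one
  passes through charts \<open>L_T(\<alpha>)\<close> that all contain \<open>p\<close>, and consecutive charts are adjacent
  in \<open>T\<close>. Hence the vertices whose chart contains \<open>p\<close> span a connected induced subgraph of \<open>T\<close>,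
  and a connected induced subgraph of a tree is a tree.\<close>

definition edge_rel :: "'a set set \<Rightarrow> 'a rel" where
  "edge_rel E = {(a, b). {a, b} \<in> E}"

lemma sym_edge_rel: "sym (edge_rel E)"
  by (auto simp: sym_def edge_rel_def insert_commute)

lemma walk_snoc:
  assumes "walk E xs" and "{last xs, z} \<in> E"
  shows "walk E (xs @ [z])"
  unfolding walk_def
proof (intro conjI allI impI)
  fix i assume i: "Suc i < length (xs @ [z])"
  have "xs \<noteq> []" using assms(1) by (simp add: walk_def)
  show "{(xs @ [z]) ! i, (xs @ [z]) ! Suc i} \<in> E"
  proof (cases "Suc i < length xs")
    case True
    then show ?thesis using assms(1) by (auto simp: walk_def nth_append)
  next
    case False
    with i \<open>xs \<noteq> []\<close> have "i = length xs - 1" "Suc i = length xs" by auto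
    then show ?thesis using assms(2) \<open>xs \<noteq> []\<close> by (auto simp: nth_append last_conv_nth)
  qed
qed simp

lemma walk_if_rtrancl_edge_rel:
  assumes "(a, b) \<in> (edge_rel E)\<^sup>*" and "\<forall>e\<in>E. e \<subseteq> W" and "a \<in> W"
  shows "\<exists>xs. walk E xs \<and> set xs \<subseteq> W \<and> hd xs = a \<and> last xs = b"
  using assms(1)
proof (induction rule: rtrancl_induct)
  case base
  then show ?case using assms(3) by (intro exI[of _ "[a]"]) (auto simp: walk_def)
next
  case (step y z)
  then obtain xs where xs: "walk E xs" "set xs \<subseteq> W" "hd xs = a" "last xs = y" by blast
  have "{y, z} \<in> E" using step(2) by (simp add: edge_rel_def)
  then have "walk E (xs @ [z])" "z \<in> W"
    using walk_snoc[OF xs(1)] xs(4) assms(2) by auto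
  then show ?case using xs by (intro exI[of _ "xs @ [z]"]) (auto simp: walk_def)
qed

lemma graph_connected_if_reachable_from:
  assumes "r \<in> W" and "\<forall>e\<in>E. e \<subseteq> W" and "\<And>a. a \<in> W \<Longrightarrow> (r, a) \<in> (edge_rel E)\<^sup>*"
  shows "graph_connected W E"
  unfolding graph_connected_def
proof (intro ballI)
  fix a b assume "a \<in> W" "b \<in> W"
  have "(a, r) \<in> (edge_rel E)\<^sup>*"
    using sym_rtrancl[OF sym_edge_rel] assms(3)[OF \<open>a \<in> W\<close>] by (rule symD)
  then have "(a, b) \<in> (edge_rel E)\<^sup>*" using assms(3)[OF \<open>b \<in> W\<close>] by simp
  then show "\<exists>xs. walk E xs \<and> set xs \<subseteq> W \<and> hd xs = a \<and> last xs = b"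
    using assms(2) \<open>a \<in> W\<close> by (rule walk_if_rtrancl_edge_rel)
qed

lemma graph_acyclic_subset: "graph_acyclic E \<Longrightarrow> E' \<subseteq> E \<Longrightarrow> graph_acyclic E'"
  unfolding graph_acyclic_def is_cycle_def walk_def by blast

lemma is_tree_induced_subgraph:
  assumes "is_tree V E" and "W \<subseteq> V" and "W \<noteq> {}"
    and "graph_connected W {e \<in> E. e \<subseteq> W}"
  shows "is_tree W {e \<in> E. e \<subseteq> W}"
proof -
  have "finite V" "is_graph V E" "graph_acyclic E"
    using assms(1) by (auto simp: is_tree_def)
  then have "finite W" "is_graph W {e \<in> E. e \<subseteq> W}" "graph_acyclic {e \<in> E. e \<subseteq> W}"
    using assms(2) finite_subset graph_acyclic_subset[of E] by (fastforce simp: is_graph_def)+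
  then show ?thesis using assms(3,4) by (simp add: is_tree_def)
qed

abbreviation arb_step :: "'a set \<Rightarrow> 'a set set \<Rightarrow> (('a \<times> ('a \<Rightarrow> real)) \<times> ('a \<times> ('a \<Rightarrow> real))) set" where
  "arb_step V E \<equiv> arb_ident V E \<union> (arb_ident V E)\<inverse>"

lemma arb_step_edge: "(u, w) \<in> arb_step V E \<Longrightarrow> {fst u, fst w} \<in> E"
  by (auto simp: arb_ident_def insert_commute)

lemma arb_rel_Image_eq:
  assumes "c \<in> arb_carrier V"
  shows "arb_rel V E `` {c} = (arb_step V E)\<^sup>* `` {c}"
  using assms by (auto simp: arb_rel_def rtrancl_eq_or_trancl)

lemma chart_path_if_rtrancl:
  assumes "\<And>u w. (u, w) \<in> S \<Longrightarrow> {fst u, fst w} \<in> E" and "(c, v) \<in> S\<^sup>*"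
  shows "(fst c, fst v) \<in> (edge_rel {e \<in> E. \<forall>\<alpha>\<in>e. in_chart (S\<^sup>* `` {c}) \<alpha>})\<^sup>*"
  using assms(2)
proof (induction rule: rtrancl_induct)
  case (step y z)
  then have "y \<in> S\<^sup>* `` {c}" "z \<in> S\<^sup>* `` {c}" by auto
  then have "in_chart (S\<^sup>* `` {c}) (fst y)" "in_chart (S\<^sup>* `` {c}) (fst z)"
    by (metis in_chart_def prod.collapse)+
  then have "(fst y, fst z) \<in> edge_rel {e \<in> E. \<forall>\<alpha>\<in>e. in_chart (S\<^sup>* `` {c}) \<alpha>}"
    using assms(1)[OF step(2)] by (simp add: edge_rel_def)
  then show ?case using step(3) by simp
qed simp

lemma chart_reachable_in_class:
  assumes "is_graph V E" and "(c, (\<alpha>, x)) \<in> (arb_step V E)\<^sup>*"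
  defines "W \<equiv> {\<beta> \<in> V. in_chart ((arb_step V E)\<^sup>* `` {c}) \<beta>}"
  shows "(fst c, \<alpha>) \<in> (edge_rel {e \<in> E. e \<subseteq> W})\<^sup>*"
proof -
  have "{e \<in> E. \<forall>\<beta>\<in>e. in_chart ((arb_step V E)\<^sup>* `` {c}) \<beta>} \<subseteq> {e \<in> E. e \<subseteq> W}"
    using assms(1) by (fastforce simp: is_graph_def W_def)
  then have "edge_rel {e \<in> E. \<forall>\<beta>\<in>e. in_chart ((arb_step V E)\<^sup>* `` {c}) \<beta>} \<subseteq> edge_rel {e \<in> E. e \<subseteq> W}"
    by (auto simp: edge_rel_def)
  then have "(edge_rel {e \<in> E. \<forall>\<beta>\<in>e. in_chart ((arb_step V E)\<^sup>* `` {c}) \<beta>})\<^sup>*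
      \<subseteq> (edge_rel {e \<in> E. e \<subseteq> W})\<^sup>*"
    by (rule rtrancl_mono)
  with chart_path_if_rtrancl[OF arb_step_edge assms(2)] show ?thesis by auto
qed

theorem lemma2p10:
  fixes V :: "'a set" and E :: "'a set set" and p :: "('a \<times> ('a \<Rightarrow> real)) set"
  assumes "is_tree V E"
    and "p \<in> arb_sing V E"
  shows "is_tree {\<alpha> \<in> V. in_chart p \<alpha>}
                 {e \<in> E. \<forall>\<alpha>\<in>e. \<alpha> \<in> V \<and> in_chart p \<alpha>}"
proof -
  define W where "W = {\<alpha> \<in> V. in_chart p \<alpha>}"
  obtain c where c: "c \<in> arb_carrier V" and "p = arb_rel V E `` {c}"
    using assms(2) by (auto simp: arb_sing_def quotient_def)
  with arb_rel_Image_eq have p: "p = (arb_step V E)\<^sup>* `` {c}" by simp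
  have "fst c \<in> W"
    using c p by (cases c) (auto simp: W_def arb_carrier_def in_chart_def)
  moreover have "(fst c, \<alpha>) \<in> (edge_rel {e \<in> E. e \<subseteq> W})\<^sup>*" if "\<alpha> \<in> W" for \<alpha>
  proof -
    from \<open>\<alpha> \<in> W\<close> obtain x where "(\<alpha>, x) \<in> p"
      by (auto simp: W_def in_chart_def)
    then have "(c, (\<alpha>, x)) \<in> (arb_step V E)\<^sup>*" by (simp add: p)
    with assms(1) show ?thesis
      unfolding W_def p is_tree_def by (blast intro: chart_reachable_in_class)
  qed
  ultimately have "graph_connected W {e \<in> E. e \<subseteq> W}"
    by (intro graph_connected_if_reachable_from) (auto simp: W_def)
  then have "is_tree W {e \<in> E. e \<subseteq> W}"
    using \<open>fst c \<in> W\<close> by (intro is_tree_induced_subgraph[OF assms(1)]) (auto simp: W_def)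
  moreover have "{e \<in> E. \<forall>\<alpha>\<in>e. \<alpha> \<in> V \<and> in_chart p \<alpha>} = {e \<in> E. e \<subseteq> W}"
    by (auto simp: W_def)
  ultimately show ?thesis by (simp add: W_def)
qed

end
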